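(* A standard quantum entity on a finite-dimensional complex Hilbert space $\mathcal{H}$ is state atomic: for states $p_{\bar c},p_{\bar d}$, if $O(e_E,p_{\bar c})\subseteq O(e_E,p_{\bar d})$ for every experiment $e_E$, then $p_{\bar c}=p_{\bar d}$.
   Context: A spectral family of $\mathcal{H}$ is a set $E=\{E_1,\dots,E_r\}$ of pairwise orthogonal nonzero orthogonal projections with $\sum_kE_k=I$. The standard quantum entity on $\mathcal{H}$ has states $p_{\bar c}$, one for each ray $\bar c$ (generated by a unit vector $c$), experiments $e_E$, one for each spectral family $E$, outcomes $x_{E_k}$, one for each orthogonal projection $E_k$, and outcome sets $O(e_E,p_{\bar c})=\{x_{E_k}:E_k\in E,\ E_kc\neq0\}$. *)

theory Defs
  imports "HOL-Analysis.Analysis"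
begin

text \<open>The finite-dimensional complex Hilbert space H is modelled as complex ^ 'n
  ('n a finite index type), with the standard Hermitian inner product.
  Operators are matrices complex ^ 'n ^ 'n.\<close>

definition hinner :: "complex ^ 'n \<Rightarrow> complex ^ 'n \<Rightarrow> complex" where
  "hinner x y = (\<Sum>i\<in>UNIV. cnj (x $ i) * y $ i)"

definition adjoint_mat :: "complex ^ 'n ^ 'n \<Rightarrow> complex ^ 'n ^ 'n" where
  "adjoint_mat A = (\<chi> i j. cnj (A $ j $ i))"

definition orth_proj :: "complex ^ 'n ^ 'n \<Rightarrow> bool" where
  "orth_proj P \<longleftrightarrow> P ** P = P \<and> adjoint_mat P = P"

definition spectral_family :: "(complex ^ 'n ^ 'n) set \<Rightarrow> bool" where
  "spectral_family E \<longleftrightarrow> finite E \<and> E \<noteq> {} \<and>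
     (\<forall>P\<in>E. orth_proj P \<and> P \<noteq> 0) \<and>
     (\<forall>P\<in>E. \<forall>Q\<in>E. P \<noteq> Q \<longrightarrow> P ** Q = 0) \<and>
     sum id E = mat 1"

definition unit_vec :: "complex ^ 'n \<Rightarrow> bool" where
  "unit_vec c \<longleftrightarrow> hinner c c = 1"

text \<open>The ray generated by c; the state p_c is identified with this ray.\<close>
definition ray :: "complex ^ 'n \<Rightarrow> (complex ^ 'n) set" where
  "ray c = {a *s c | a. True}"

text \<open>Outcome set O(e_E, p_c): outcomes x_{E_k} are identified with the projections E_k.\<close>
definition outcome_set :: "(complex ^ 'n ^ 'n) set \<Rightarrow> complex ^ 'n \<Rightarrow> (complex ^ 'n ^ 'n) set" where
  "outcome_set E c = {P \<in> E. P *v c \<noteq> 0}"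

end

theory Submission
  imports Defs
begin

text \<open>For a unit vector d, the rank-one projection P onto d and its complement
  mat 1 - P form a spectral family. The complement annihilates d, so by hypothesis it must
  annihilate c too; hence c = \<langle>d, c\<rangle> d lies on the ray of d, with a nonzero coefficient
  because c is a unit vector.\<close>

lemma hinner_scale_right: "hinner x (a *s y) = a * hinner x y"
  by (simp add: hinner_def sum_distrib_left mult_ac)

lemma unit_vec_nonzero: "unit_vec c \<Longrightarrow> c \<noteq> 0"
  by (auto simp: unit_vec_def hinner_def)

lemma ray_scale:
  assumes "a \<noteq> 0"
  shows "ray (a *s d) = ray d"
proof
  show "ray (a *s d) \<subseteq> ray d"
    by (auto simp: ray_def vector_smult_assoc)
  show "ray d \<subseteq> ray (a *s d)"
  proof
    fix x assume "x \<in> ray d"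
    then obtain b where "x = b *s d" by (auto simp: ray_def)
    then have "x = (b / a) *s (a *s d)" using assms by (simp add: vector_smult_assoc)
    then show "x \<in> ray (a *s d)" unfolding ray_def by blast
  qed
qed

lemma matrix_diff_ldistrib: "(A :: 'a::ring_1 ^ 'n ^ 'm) ** (B - C) = A ** B - A ** C"
  by (simp add: matrix_matrix_mult_def vec_eq_iff sum_subtractf right_diff_distrib)

lemma matrix_diff_rdistrib: "((A - B) :: 'a::ring_1 ^ 'n ^ 'm) ** C = A ** C - B ** C"
  by (simp add: matrix_matrix_mult_def vec_eq_iff sum_subtractf left_diff_distrib)

lemma adjoint_mat_diff: "adjoint_mat (A - B) = adjoint_mat A - adjoint_mat B"
  by (simp add: adjoint_mat_def vec_eq_iff)

lemma adjoint_mat_id: "adjoint_mat (mat 1) = mat 1"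
  by (simp add: adjoint_mat_def mat_def vec_eq_iff)

lemma orth_proj_id: "orth_proj (mat 1)"
  by (simp add: orth_proj_def adjoint_mat_id)

lemma orth_proj_complement:
  assumes "orth_proj P"
  shows "orth_proj (mat 1 - P)"
  using assms
  by (simp add: orth_proj_def matrix_diff_ldistrib matrix_diff_rdistrib adjoint_mat_diff
      adjoint_mat_id)

lemma spectral_family_id: "spectral_family {mat 1 :: complex ^ 'n ^ 'n}"
proof -
  have "(mat 1 :: complex ^ 'n ^ 'n) \<noteq> 0"
    by (auto simp: vec_eq_iff mat_def)
  then show ?thesis
    by (simp add: spectral_family_def orth_proj_id)
qed

lemma spectral_family_complement:
  assumes P: "orth_proj P" and "P \<noteq> 0" and "P \<noteq> mat 1"
  shows "spectral_family {P, mat 1 - P}"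
proof -
  have idem: "P ** P = P" using P by (simp add: orth_proj_def)
  have PQ: "P ** (mat 1 - P) = 0" and QP: "(mat 1 - P) ** P = 0"
    using idem by (simp_all add: matrix_diff_ldistrib matrix_diff_rdistrib)
  \<comment> \<open>P = mat 1 - P would give P = P ** P = P ** (mat 1 - P) = 0\<close>
  have "P \<noteq> mat 1 - P" using PQ idem \<open>P \<noteq> 0\<close> by metis
  moreover have "mat 1 - P \<noteq> 0" using \<open>P \<noteq> mat 1\<close> by simp
  ultimately show ?thesis
    using P \<open>P \<noteq> 0\<close> PQ QP orth_proj_complement
    by (auto simp: spectral_family_def)
qed

lemma outcome_set_subset_imp_kernel:
  assumes subset: "\<forall>E. spectral_family E \<longrightarrow> outcome_set E c \<subseteq> outcome_set E d"
    and Q: "orth_proj Q" and Qd: "Q *v d = 0"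
  shows "Q *v c = 0"
proof (rule ccontr)
  assume Qc: "Q *v c \<noteq> 0"
  obtain E where "spectral_family E" and "Q \<in> E"
  proof (cases "Q = mat 1")
    case True
    then show ?thesis using that spectral_family_id by blast
  next
    case False
    with Qc have "Q \<noteq> 0" by auto
    with False Q show ?thesis using that spectral_family_complement by blast
  qed
  with Qc have "Q \<in> outcome_set E c" by (simp add: outcome_set_def)
  with subset \<open>spectral_family E\<close> have "Q \<in> outcome_set E d" by blast
  with Qd show False by (simp add: outcome_set_def)
qed

definition rank_one_proj :: "complex ^ 'n \<Rightarrow> complex ^ 'n ^ 'n" where
  "rank_one_proj d = (\<chi> i j. d $ i * cnj (d $ j))"

lemma rank_one_proj_apply: "rank_one_proj d *v x = hinner d x *s d"
  by (simp add: vec_eq_iff rank_one_proj_def matrix_vector_mult_def hinner_def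
      sum_distrib_left mult_ac)

lemma orth_proj_rank_one_proj:
  assumes "unit_vec d"
  shows "orth_proj (rank_one_proj d)"
proof -
  have "rank_one_proj d ** rank_one_proj d = rank_one_proj d"
    using assms unfolding matrix_eq
    by (simp add: matrix_vector_mul_assoc[symmetric] rank_one_proj_apply hinner_scale_right
        unit_vec_def)
  moreover have "adjoint_mat (rank_one_proj d) = rank_one_proj d"
    by (simp add: adjoint_mat_def rank_one_proj_def vec_eq_iff mult.commute)
  ultimately show ?thesis by (simp add: orth_proj_def)
qed

theorem mainTheorem16:
  fixes c d :: "complex ^ 'n"
  assumes "unit_vec c" and "unit_vec d"
    and "\<forall>E. spectral_family E \<longrightarrow> outcome_set E c \<subseteq> outcome_set E d"
  shows "ray c = ray d"
proof -
  let ?Q = "mat 1 - rank_one_proj d"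
  have "orth_proj ?Q"
    using assms(2) by (simp add: orth_proj_complement orth_proj_rank_one_proj)
  moreover have "?Q *v d = 0"
    using assms(2) by (simp add: matrix_vector_mult_diff_rdistrib rank_one_proj_apply unit_vec_def)
  ultimately have "?Q *v c = 0"
    using assms(3) by (rule outcome_set_subset_imp_kernel[rotated])
  then have c: "c = hinner d c *s d"
    by (simp add: matrix_vector_mult_diff_rdistrib rank_one_proj_apply)
  with unit_vec_nonzero[OF assms(1)] have "hinner d c \<noteq> 0" by auto
  with c show ?thesis by (metis ray_scale)
qed

end
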